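(* Consider the mining game with $N\ge 2$ miners, costs-per-hash $0<c_1\le\dots\le c_N$, reward $R>0$ and capacity parameter $\gamma\ge0$, let $h^*$ be its unique equilibrium hash rate profile, $H^*=\sum_j h_j^*>0$, and let $n$ be the number of active miners. Define the equilibrium marginal cost of miner $i$ by $MC_i^*:=c_i+\gamma h_i^*$, $1\le i\le N$. Then $(MC_i^* )_{1\le i\le N}$ is an increasing sequence, and for each $i$, $$MC_i^*<\frac{R}{H^*}\iff c_i<\frac{R}{H^*}\iff 1\le i\le n.$$ Moreover, the sequence $(c_i/MC_i^* )_{1\le i\le N}$ is increasing and the sequence $(\gamma h_i^*/MC_i^* )_{1\le i\le N}$ is decreasing.
   Context: Mining game: $N\ge2$ miners with costs-per-hash $0<c_1\le\dots\le c_N$; each miner $i$ chooses $h_i\ge0$, $H=\sum_j h_j$, and the payoff of miner $i$ is $\frac{h_i}{H}R-c_ih_i-\frac{\gamma}{2}h_i^2$ if $H>0$, and $0$ if $H=0$, where $R>0$ and $\gamma\ge 0$. An equilibrium hash rate profile is a pure-strategy Nash equilibrium $h^*\in[0,\infty)^N$ of this game; it exists and is unique. Miner $i$ is active if $h_i^*>0$. A sequence $(x_i)$ is called increasing if $x_i\le x_{i+1}$ for all $i$ and decreasing if $x_i\ge x_{i+1}$ for all $i$. *)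

theory Defs
  imports Complex_Main
begin

text \<open>Mining game with miners indexed by 1..N. A hash rate profile is a function
  h :: nat => real; only the values on 1..N matter.\<close>

definition total_hash :: "nat \<Rightarrow> (nat \<Rightarrow> real) \<Rightarrow> real" where
  "total_hash N h = (\<Sum>j=1..N. h j)"

definition payoff :: "nat \<Rightarrow> real \<Rightarrow> (nat \<Rightarrow> real) \<Rightarrow> real \<Rightarrow> (nat \<Rightarrow> real) \<Rightarrow> nat \<Rightarrow> real" where
  "payoff N R c \<gamma> h i =
     (if total_hash N h = 0 then 0
      else h i / total_hash N h * R - c i * h i - \<gamma> / 2 * (h i)^2)"

definition is_equilibrium :: "nat \<Rightarrow> real \<Rightarrow> (nat \<Rightarrow> real) \<Rightarrow> real \<Rightarrow> (nat \<Rightarrow> real) \<Rightarrow> bool" where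
  "is_equilibrium N R c \<gamma> h \<longleftrightarrow>
     (\<forall>i\<in>{1..N}. 0 \<le> h i) \<and>
     (\<forall>i\<in>{1..N}. \<forall>x\<ge>0. payoff N R c \<gamma> (h(i := x)) i \<le> payoff N R c \<gamma> h i)"

end

theory Submission
  imports Defs
begin

(* Let H > 0 be the equilibrium total (a miner facing an idle network would enter).
   Against the others' total S = H - h_i, miner i maximises x R / (S + x) - c_i x - gamma x^2 / 2
   over x >= 0, and the first-order conditions read c_i + gamma h_i = R/H - (R/H^2) h_i if
   h_i > 0 and R/H <= c_i if h_i = 0. With a = R/H and b = R/H^2 this solves to
   h_i = max 0 ((a - c_i) / (b + gamma)), hence
     MC_i = max c_i ((b c_i + gamma a) / (b + gamma)),
   a nondecreasing function of c_i which lies below a exactly when c_i does. Cross-multiplying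
   shows that c/MC is nondecreasing as well, and gamma h_i / MC_i = 1 - c_i / MC_i. As the costs
   are sorted, the active miners {i. c_i < a} are the first n. *)

definition payoff_given_others :: "real \<Rightarrow> real \<Rightarrow> real \<Rightarrow> real \<Rightarrow> real \<Rightarrow> real" where
  "payoff_given_others R c \<gamma> S x = x / (S + x) * R - c * x - \<gamma> / 2 * x\<^sup>2"

lemma payoff_given_others_has_derivative:
  assumes "S + y \<noteq> 0"
  shows "(payoff_given_others R c \<gamma> S has_real_derivative R * S / (S + y)\<^sup>2 - c - \<gamma> * y) (at y)"
proof -
  have "(payoff_given_others R c \<gamma> S has_real_derivative
          ((1 * (S + y) - y * 1) / (S + y)\<^sup>2) * R - c * 1 - \<gamma> / 2 * (2 * y ^ 1 * 1)) (at y)"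
    unfolding payoff_given_others_def using assms
    by (intro derivative_eq_intros) (auto simp: power2_eq_square)
  then show ?thesis
    by (simp add: field_simps)
qed

lemma interior_max_first_order:
  assumes "0 < y" "S + y \<noteq> 0"
    and max: "\<And>x. 0 \<le> x \<Longrightarrow> payoff_given_others R c \<gamma> S x \<le> payoff_given_others R c \<gamma> S y"
  shows "R * S / (S + y)\<^sup>2 = c + \<gamma> * y"
proof -
  have "\<forall>z. \<bar>y - z\<bar> < y \<longrightarrow> payoff_given_others R c \<gamma> S z \<le> payoff_given_others R c \<gamma> S y"
    using max by auto
  then have "R * S / (S + y)\<^sup>2 - c - \<gamma> * y = 0"
    using DERIV_local_max[OF payoff_given_others_has_derivative[OF assms(2)] \<open>0 < y\<close>] by blast
  then show ?thesis by simp
qed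

lemma boundary_max_first_order:
  assumes "S \<noteq> 0"
    and max: "\<And>x. 0 \<le> x \<Longrightarrow> payoff_given_others R c \<gamma> S x \<le> payoff_given_others R c \<gamma> S 0"
  shows "R / S \<le> c"
proof (rule ccontr)
  assume "\<not> R / S \<le> c"
  then have "0 < R * S / (S + 0)\<^sup>2 - c - \<gamma> * 0"
    using assms(1) by (simp add: power2_eq_square)
  from DERIV_pos_inc_right[OF payoff_given_others_has_derivative this] assms(1)
  obtain d where "0 < d"
    and "\<And>t. 0 < t \<Longrightarrow> t < d \<Longrightarrow> payoff_given_others R c \<gamma> S 0 < payoff_given_others R c \<gamma> S (0 + t)"
    by auto
  then have "payoff_given_others R c \<gamma> S 0 < payoff_given_others R c \<gamma> S (d / 2)"
    using \<open>0 < d\<close> by simp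
  with max[of "d / 2"] \<open>0 < d\<close> show False by simp
qed

lemma payoff_given_others_empty_network_pos:
  assumes "0 < R" "0 \<le> c" "0 \<le> \<gamma>"
  shows "\<exists>x>0. 0 < payoff_given_others R c \<gamma> 0 x"
proof -
  define x where "x = R / (R + c + \<gamma>)"
  have "0 < x" "x \<le> 1"
    using assms by (auto simp: x_def)
  have "x\<^sup>2 \<le> x"
    using \<open>0 < x\<close> \<open>x \<le> 1\<close> by (simp add: power2_eq_square mult_left_le)
  then have "\<gamma> * x\<^sup>2 \<le> \<gamma> * x"
    using assms(3) by (rule mult_left_mono)
  then have "\<gamma> / 2 * x\<^sup>2 \<le> \<gamma> * x"
    using mult_nonneg_nonneg[OF assms(3), of x] \<open>0 < x\<close> by linarith
  moreover have "(c + \<gamma>) * x < R"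
    using assms by (simp add: x_def field_simps)
  ultimately show ?thesis
    using \<open>0 < x\<close> by (intro exI[of _ x]) (auto simp: payoff_given_others_def algebra_simps)
qed

definition equilibrium_mc :: "real \<Rightarrow> real \<Rightarrow> real \<Rightarrow> real \<Rightarrow> real" where
  "equilibrium_mc a b \<gamma> c = max c ((b * c + \<gamma> * a) / (b + \<gamma>))"

lemma marginal_cost_eq_equilibrium_mc:
  assumes "0 \<le> \<gamma>" "0 < b + \<gamma>"
  shows "c + \<gamma> * max 0 ((a - c) / (b + \<gamma>)) = equilibrium_mc a b \<gamma> c"
proof -
  have "c + \<gamma> * max 0 ((a - c) / (b + \<gamma>)) = max c (c + \<gamma> * ((a - c) / (b + \<gamma>)))"
    using assms(1) by (simp add: max_mult_distrib_left max_add_distrib_right)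
  also have "c + \<gamma> * ((a - c) / (b + \<gamma>)) = (b * c + \<gamma> * a) / (b + \<gamma>)"
    using assms(2) by (simp add: field_simps)
  finally show ?thesis
    by (simp add: equilibrium_mc_def)
qed

lemma equilibrium_mc_mono:
  assumes "0 \<le> b" "0 < b + \<gamma>" "c \<le> c'"
  shows "equilibrium_mc a b \<gamma> c \<le> equilibrium_mc a b \<gamma> c'"
proof -
  have "(b * c + \<gamma> * a) / (b + \<gamma>) \<le> (b * c' + \<gamma> * a) / (b + \<gamma>)"
    using assms by (intro divide_right_mono add_right_mono mult_left_mono) auto
  then show ?thesis
    using assms(3) by (auto simp: equilibrium_mc_def)
qed

lemma equilibrium_mc_less_iff:
  assumes "0 < b" "0 \<le> \<gamma>"
  shows "equilibrium_mc a b \<gamma> c < a \<longleftrightarrow> c < a"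
proof -
  have "(b * c + \<gamma> * a) / (b + \<gamma>) < a \<longleftrightarrow> b * c < b * a"
    using assms by (simp add: divide_less_eq algebra_simps)
  then show ?thesis
    using assms(1) by (auto simp: equilibrium_mc_def)
qed

lemma cost_over_equilibrium_mc_mono:
  assumes "0 \<le> a" "0 \<le> \<gamma>" "0 < b + \<gamma>" "0 < c" "c \<le> c'"
  shows "c / equilibrium_mc a b \<gamma> c \<le> c' / equilibrium_mc a b \<gamma> c'"
proof -
  define L where "L x = (b * x + \<gamma> * a) / (b + \<gamma>)" for x
  have mc: "equilibrium_mc a b \<gamma> x = max x (L x)" for x
    by (simp add: equilibrium_mc_def L_def)
  have "c * L c' - c' * L c = \<gamma> * a * (c - c') / (b + \<gamma>)"
    using assms(3)
    by (simp add: L_def diff_divide_distrib[symmetric] times_divide_eq_right[symmetric] algebra_simps)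
  also have "\<dots> \<le> 0"
    using assms by (intro divide_nonpos_pos mult_nonneg_nonpos) auto
  finally have "c * L c' \<le> c' * L c"
    by simp
  moreover have "c * c' \<le> c' * max c (L c)"
    using assms(4,5) by (simp add: mult.commute mult_left_mono)
  moreover have "c' * L c \<le> c' * max c (L c)"
    using assms(4,5) by (simp add: mult_left_mono)
  ultimately have "c * max c' (L c') \<le> c' * max c (L c)"
    using assms(4) by (simp add: max_mult_distrib_left)
  moreover have "0 < max c (L c)" "0 < max c' (L c')"
    using assms(4,5) by (auto simp: less_max_iff_disj)
  ultimately show ?thesis
    unfolding mc by (simp add: divide_simps mult.commute)
qed

lemma down_closed_eq_atLeastAtMost_card:
  fixes A :: "nat set"
  assumes "A \<subseteq> {1..N}" and "\<And>i j. j \<in> A \<Longrightarrow> 1 \<le> i \<Longrightarrow> i \<le> j \<Longrightarrow> i \<in> A"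
  shows "A = {1..card A}"
proof (cases "A = {}")
  case False
  have "finite A"
    using assms(1) finite_subset by blast
  with False have "Max A \<in> A"
    by simp
  then have "A = {1..Max A}"
    using assms \<open>finite A\<close> by fastforce
  then show ?thesis
    by (metis card_atLeastAtMost diff_Suc_1)
qed simp

lemma sorted_below_threshold_eq_atLeastAtMost:
  fixes c :: "nat \<Rightarrow> 'a::linorder"
  assumes "\<forall>i\<in>{1..<N}. c i \<le> c (i + 1)"
  shows "{i\<in>{1..N}. c i < t} = {1..card {i\<in>{1..N}. c i < t}}"
proof (rule down_closed_eq_atLeastAtMost_card[where N = N])
  have "c i \<le> c j" if "1 \<le> i" "i \<le> j" "j \<le> N" for i j
    using lift_Suc_mono_le_ivl[of "{1..<N}" c i j] assms that by auto
  then show "i \<in> {i\<in>{1..N}. c i < t}" if "j \<in> {i\<in>{1..N}. c i < t}" "1 \<le> i" "i \<le> j" for i j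
    using that by (auto intro: le_less_trans)
qed auto

lemma total_hash_fun_upd:
  assumes "i \<in> {1..N}"
  shows "total_hash N (h(i := x)) = total_hash N h - h i + x"
proof -
  have "total_hash N (h(i := x)) = x + sum h ({1..N} - {i})"
    unfolding total_hash_def using assms by (simp add: sum.remove)
  moreover have "total_hash N h = h i + sum h ({1..N} - {i})"
    unfolding total_hash_def using assms by (simp add: sum.remove)
  ultimately show ?thesis by simp
qed

lemma total_hash_minus_nonneg:
  assumes "\<forall>j\<in>{1..N}. 0 \<le> h j" "i \<in> {1..N}"
  shows "0 \<le> total_hash N h - h i"
proof -
  have "total_hash N h - h i = sum h ({1..N} - {i})"
    unfolding total_hash_def using assms(2) by (simp add: sum.remove)
  also have "\<dots> \<ge> 0"
    using assms(1) by (intro sum_nonneg) auto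
  finally show ?thesis .
qed

lemma payoff_fun_upd:
  assumes "\<forall>j\<in>{1..N}. 0 \<le> h j" "i \<in> {1..N}" "0 \<le> x"
  shows "payoff N R c \<gamma> (h(i := x)) i = payoff_given_others R (c i) \<gamma> (total_hash N h - h i) x"
proof -
  have "total_hash N h - h i + x = 0 \<Longrightarrow> x = 0"
    using total_hash_minus_nonneg[OF assms(1,2)] assms(3) by linarith
  then show ?thesis
    by (auto simp: payoff_def payoff_given_others_def total_hash_fun_upd[OF assms(2)])
qed

lemma equilibrium_best_response:
  assumes eq: "is_equilibrium N R c \<gamma> h" and i: "i \<in> {1..N}" and "0 \<le> x"
  shows "payoff_given_others R (c i) \<gamma> (total_hash N h - h i) x
    \<le> payoff_given_others R (c i) \<gamma> (total_hash N h - h i) (h i)"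
proof -
  have nonneg: "\<forall>j\<in>{1..N}. 0 \<le> h j"
    using eq by (simp add: is_equilibrium_def)
  have "payoff N R c \<gamma> (h(i := x)) i \<le> payoff N R c \<gamma> (h(i := h i)) i"
    using eq i \<open>0 \<le> x\<close> by (simp add: is_equilibrium_def)
  then show ?thesis
    using nonneg i \<open>0 \<le> x\<close> by (simp only: payoff_fun_upd)
qed

lemma equilibrium_total_hash_pos:
  assumes eq: "is_equilibrium N R c \<gamma> h" and "0 < R" "0 \<le> \<gamma>"
    and i: "i \<in> {1..N}" and "0 \<le> c i"
  shows "0 < total_hash N h"
proof (rule ccontr)
  have nonneg: "\<forall>j\<in>{1..N}. 0 \<le> h j"
    using eq by (simp add: is_equilibrium_def)
  assume "\<not> 0 < total_hash N h"
  moreover have "0 \<le> total_hash N h"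
    unfolding total_hash_def using nonneg by (intro sum_nonneg) auto
  ultimately have "total_hash N h = 0"
    by simp
  moreover have "h i = 0"
    using \<open>total_hash N h = 0\<close> nonneg i sum_nonneg_eq_0_iff[of "{1..N}" h]
    by (simp add: total_hash_def)
  moreover obtain x where "0 < x" "0 < payoff_given_others R (c i) \<gamma> 0 x"
    using payoff_given_others_empty_network_pos assms by blast
  ultimately show False
    using equilibrium_best_response[OF eq i, of x] by (simp add: payoff_given_others_def)
qed

lemma equilibrium_first_order:
  assumes eq: "is_equilibrium N R c \<gamma> h" and i: "i \<in> {1..N}"
    and H: "0 < total_hash N h"
  shows equilibrium_active_first_order:
      "0 < h i \<Longrightarrow> c i + \<gamma> * h i = R / total_hash N h - R / (total_hash N h)\<^sup>2 * h i"
    and equilibrium_inactive_first_order: "h i = 0 \<Longrightarrow> R / total_hash N h \<le> c i"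
proof -
  define S where "S = total_hash N h - h i"
  have H_eq: "S + h i = total_hash N h"
    by (simp add: S_def)
  have best: "\<And>x. 0 \<le> x \<Longrightarrow> payoff_given_others R (c i) \<gamma> S x \<le> payoff_given_others R (c i) \<gamma> S (h i)"
    unfolding S_def by (rule equilibrium_best_response[OF eq i])
  show "c i + \<gamma> * h i = R / total_hash N h - R / (total_hash N h)\<^sup>2 * h i" if "0 < h i"
  proof -
    have "R * S / (S + h i)\<^sup>2 = c i + \<gamma> * h i"
      using interior_max_first_order[OF that _ best] H H_eq by simp
    moreover have "R * S / (S + h i)\<^sup>2 = R / total_hash N h - R / (total_hash N h)\<^sup>2 * h i"
      unfolding H_eq using H by (simp add: S_def field_simps power2_eq_square)
    ultimately show ?thesis by simp
  qed
  show "R / total_hash N h \<le> c i" if "h i = 0"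
    using boundary_max_first_order[of S R "c i" \<gamma>] best H H_eq that by simp
qed

lemma equilibrium_hash_closed_form:
  assumes eq: "is_equilibrium N R c \<gamma> h" and i: "i \<in> {1..N}"
    and H: "0 < total_hash N h" and "0 < R" "0 \<le> \<gamma>"
  shows "h i = max 0 ((R / total_hash N h - c i) / (R / (total_hash N h)\<^sup>2 + \<gamma>))"
proof -
  define a where "a = R / total_hash N h"
  define b where "b = R / (total_hash N h)\<^sup>2"
  have "0 < b + \<gamma>"
    using assms by (simp add: b_def add_pos_nonneg)
  have "0 \<le> h i"
    using eq i by (simp add: is_equilibrium_def)
  have "h i = max 0 ((a - c i) / (b + \<gamma>))"
  proof (cases "0 < h i")
    case True
    then have "(b + \<gamma>) * h i = a - c i"
      using equilibrium_active_first_order[OF eq i H] by (simp add: a_def b_def algebra_simps)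
    then have "(a - c i) / (b + \<gamma>) = h i"
      using \<open>0 < b + \<gamma>\<close> by (simp add: field_simps)
    then show ?thesis
      using True by simp
  next
    case False
    then have "a \<le> c i" "h i = 0"
      using equilibrium_inactive_first_order[OF eq i H] \<open>0 \<le> h i\<close> by (auto simp: a_def)
    then show ?thesis
      using \<open>0 < b + \<gamma>\<close> by (simp add: divide_nonpos_pos)
  qed
  then show ?thesis
    by (simp add: a_def b_def)
qed

lemma equilibrium_active_iff:
  assumes "is_equilibrium N R c \<gamma> h" and "i \<in> {1..N}"
    and "0 < total_hash N h" and "0 < R" "0 \<le> \<gamma>"
  shows "0 < h i \<longleftrightarrow> c i < R / total_hash N h"
proof -
  have "0 < R / (total_hash N h)\<^sup>2 + \<gamma>"
    using assms by (simp add: add_pos_nonneg)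
  then show ?thesis
    by (simp add: equilibrium_hash_closed_form[OF assms] less_max_iff_disj zero_less_divide_iff)
qed

lemma equilibrium_marginal_cost:
  assumes eq: "is_equilibrium N R c \<gamma> h" and i: "i \<in> {1..N}"
    and H: "0 < total_hash N h" and "0 < R" "0 \<le> \<gamma>"
  shows "c i + \<gamma> * h i = equilibrium_mc (R / total_hash N h) (R / (total_hash N h)\<^sup>2) \<gamma> (c i)"
  using assms marginal_cost_eq_equilibrium_mc[of \<gamma> "R / (total_hash N h)\<^sup>2"]
  by (simp add: equilibrium_hash_closed_form[OF eq i H] add_pos_nonneg)

lemma equilibrium_marginal_cost_less_iff:
  assumes "is_equilibrium N R c \<gamma> h" and "i \<in> {1..N}"
    and "0 < total_hash N h" and "0 < R" "0 \<le> \<gamma>"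
  shows "c i + \<gamma> * h i < R / total_hash N h \<longleftrightarrow> c i < R / total_hash N h"
  using assms by (simp add: equilibrium_marginal_cost[OF assms] equilibrium_mc_less_iff)

lemma equilibrium_marginal_cost_compare:
  assumes eq: "is_equilibrium N R c \<gamma> h" and ij: "i \<in> {1..N}" "j \<in> {1..N}"
    and H: "0 < total_hash N h" and "0 < R" "0 \<le> \<gamma>"
    and "0 < c i" "c i \<le> c j"
  shows "c i + \<gamma> * h i \<le> c j + \<gamma> * h j"
    and "c i / (c i + \<gamma> * h i) \<le> c j / (c j + \<gamma> * h j)"
    and "\<gamma> * h j / (c j + \<gamma> * h j) \<le> \<gamma> * h i / (c i + \<gamma> * h i)"
proof -
  define a where "a = R / total_hash N h"
  define b where "b = R / (total_hash N h)\<^sup>2"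
  have "0 < a" "0 < b"
    using assms by (simp_all add: a_def b_def)
  have MC: "c k + \<gamma> * h k = equilibrium_mc a b \<gamma> (c k)" if "k \<in> {1..N}" for k
    using equilibrium_marginal_cost[OF eq that H] assms by (simp add: a_def b_def)
  show "c i + \<gamma> * h i \<le> c j + \<gamma> * h j"
    using equilibrium_mc_mono[of b \<gamma>] \<open>0 < b\<close> assms by (simp add: MC ij)
  show ratio: "c i / (c i + \<gamma> * h i) \<le> c j / (c j + \<gamma> * h j)"
    using cost_over_equilibrium_mc_mono[of a \<gamma> b] \<open>0 < a\<close> \<open>0 < b\<close> assms by (simp add: MC ij)
  have share: "\<gamma> * h k / (c k + \<gamma> * h k) = 1 - c k / (c k + \<gamma> * h k)" if "0 < c k + \<gamma> * h k" for k
    using that by (simp add: field_simps)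
  have "0 < c k + \<gamma> * h k" if "k \<in> {1..N}" "0 < c k" for k
    using eq that \<open>0 \<le> \<gamma>\<close> by (simp add: is_equilibrium_def add_pos_nonneg)
  then show "\<gamma> * h j / (c j + \<gamma> * h j) \<le> \<gamma> * h i / (c i + \<gamma> * h i)"
    using ratio ij assms by (simp add: share)
qed

theorem proposition4p2:
  fixes N :: nat and R \<gamma> :: real and c h :: "nat \<Rightarrow> real"
  assumes N2: "N \<ge> 2"
    and cpos: "\<forall>i\<in>{1..N}. 0 < c i"
    and cmono: "\<forall>i\<in>{1..<N}. c i \<le> c (i + 1)"
    and Rpos: "R > 0"
    and gam: "\<gamma> \<ge> 0"
    and eq: "is_equilibrium N R c \<gamma> h"
  shows "let H = total_hash N h;
             n = card {i\<in>{1..N}. h i > 0};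
             MC = (\<lambda>i. c i + \<gamma> * h i)
         in H > 0
            \<and> (\<forall>i\<in>{1..<N}. MC i \<le> MC (i + 1))
            \<and> (\<forall>i\<in>{1..N}. (MC i < R / H \<longleftrightarrow> c i < R / H) \<and> (c i < R / H \<longleftrightarrow> i \<le> n))
            \<and> (\<forall>i\<in>{1..<N}. c i / MC i \<le> c (i + 1) / MC (i + 1))
            \<and> (\<forall>i\<in>{1..<N}. \<gamma> * h (i + 1) / MC (i + 1) \<le> \<gamma> * h i / MC i)"
proof -
  define H where "H = total_hash N h"
  define n where "n = card {i\<in>{1..N}. h i > 0}"
  have "1 \<in> {1..N}"
    using N2 by simp
  then have "0 < H"
    using equilibrium_total_hash_pos[OF eq Rpos gam] cpos by (fastforce simp: H_def)
  have "{i\<in>{1..N}. h i > 0} = {i\<in>{1..N}. c i < R / H}"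
    using equilibrium_active_iff[OF eq _ _ Rpos gam] \<open>0 < H\<close> by (auto simp: H_def)
  then have active_set: "{i\<in>{1..N}. c i < R / H} = {1..n}"
    using sorted_below_threshold_eq_atLeastAtMost[OF cmono, of "R / H"] by (simp add: n_def)
  have active: "c i < R / H \<longleftrightarrow> i \<le> n" if "i \<in> {1..N}" for i
    using that arg_cong[OF active_set, of "\<lambda>A. i \<in> A"] by simp
  have consecutive: "c i + \<gamma> * h i \<le> c (i + 1) + \<gamma> * h (i + 1)
      \<and> c i / (c i + \<gamma> * h i) \<le> c (i + 1) / (c (i + 1) + \<gamma> * h (i + 1))
      \<and> \<gamma> * h (i + 1) / (c (i + 1) + \<gamma> * h (i + 1)) \<le> \<gamma> * h i / (c i + \<gamma> * h i)"
    if "i \<in> {1..<N}" for i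
    using equilibrium_marginal_cost_compare[OF eq _ _ _ Rpos gam, of i "i + 1"] that \<open>0 < H\<close> cpos cmono
    by (simp add: H_def)
  have threshold: "(c i + \<gamma> * h i < R / H \<longleftrightarrow> c i < R / H) \<and> (c i < R / H \<longleftrightarrow> i \<le> n)"
    if "i \<in> {1..N}" for i
    using equilibrium_marginal_cost_less_iff[OF eq that _ Rpos gam] \<open>0 < H\<close> active[OF that]
    by (simp add: H_def)
  show ?thesis
    unfolding Let_def H_def[symmetric] n_def[symmetric]
    using \<open>0 < H\<close> consecutive threshold by blast
qed

end
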